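(* Let $Q$ be a weakly compact convex subset of a Banach space $U$. Let $r>0$, let $\beta:Q\to[0,1)$, and let $\beta_n:Q\to\mathbb{R}$ ($n\geq1$) be functions with $\beta_n(p)\to\beta(p)$ for every $p\in Q$. Suppose $T:Q\to Q$ satisfies: for all $p,q\in Q$ and $n\geq1$, $\|p-q\|<r$ implies $\|T^np-T^nq\|\leq\beta_n(p)\|p-q\|$. If there exists $q_0\in Q$ such that the asymptotic radius of $\{T^nq_0\}_n$ relative to $Q$ is less than $r$, then $T$ has a unique fixed point.
   Context: For a bounded sequence $\{x_n\}_n$ in $U$, its asymptotic radius relative to $Q$ is $\inf_{y\in Q}\limsup_{n\to\infty}\|x_n-y\|$. *)

theory Defs
  imports "HOL-Analysis.Analysis" "HOL-Library.Liminf_Limsup"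
begin

definition weak_topology :: "('a::real_normed_vector) topology" where
  "weak_topology = topology_generated_by
     {f -` U | (f :: 'a \<Rightarrow> real) U. bounded_linear f \<and> open U}"

definition weakly_compact :: "('a::real_normed_vector) set \<Rightarrow> bool" where
  "weakly_compact Q \<longleftrightarrow> compactin weak_topology Q"

definition asym_radius :: "('a::real_normed_vector) set \<Rightarrow> (nat \<Rightarrow> 'a) \<Rightarrow> ereal" where
  "asym_radius Q x = (INF y\<in>Q. limsup (\<lambda>n. ereal (norm (x n - y))))"

end

(*
  Let x n = T^n q0. For every t the set of y with limsup ||x n - y|| <= t is closed and convex,
  hence weakly closed by the Hahn-Banach separation theorem, so weak compactness of Q yields an
  asymptotic centre y in Q of minimal radius R, and R < r. Since T^m maps x n to x (n + m), the
  contraction estimate shows that T^m y has radius at most beta_m(y) R; choosing m with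
  beta_m(y) < 1, minimality forces R = 0. Thus the orbit converges to y, and y is fixed because
  T is continuous near y. Two fixed points are joined by a chain of points of Q with steps
  shorter than r; for large n every beta_n at the chain points is below 1, so
  ||p - q|| = ||T^n p - T^n q|| < ||p - q||.
*)

theory Submission
  imports Defs
begin

section \<open>The Hahn-Banach theorem for sublinear functionals\<close>

definition sublinear :: "('a::real_vector \<Rightarrow> real) \<Rightarrow> bool" where
  "sublinear p \<longleftrightarrow>
     (\<forall>x y. p (x + y) \<le> p x + p y) \<and> (\<forall>t x. 0 < t \<longrightarrow> p (t *\<^sub>R x) = t * p x)"

lemma sublinear_add: "sublinear p \<Longrightarrow> p (x + y) \<le> p x + p y"
  by (simp add: sublinear_def)

lemma sublinear_scaleR: "sublinear p \<Longrightarrow> 0 < t \<Longrightarrow> p (t *\<^sub>R x) = t * p x"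
  by (simp add: sublinear_def)

lemma sublinear_zero:
  assumes "sublinear p" shows "p 0 = 0"
  using sublinear_scaleR[OF assms, of 2 0] by simp

lemma sublinear_scaleR_ge:
  assumes p: "sublinear p" shows "t * p x \<le> p (t *\<^sub>R x)"
proof (cases t "0::real" rule: linorder_cases)
  case less
  have "0 = p (t *\<^sub>R x + (- t) *\<^sub>R x)"
    by (simp add: sublinear_zero[OF p] flip: scaleR_add_left)
  also have "\<dots> \<le> p (t *\<^sub>R x) + p ((- t) *\<^sub>R x)"
    by (rule sublinear_add[OF p])
  also have "p ((- t) *\<^sub>R x) = - t * p x"
    using sublinear_scaleR[OF p, of "- t"] less by simp
  finally show ?thesis by simp
qed (simp_all add: sublinear_zero[OF p] sublinear_scaleR[OF p])

text \<open>A linear functional on a subspace, dominated by \<open>p\<close>, is represented by its graph,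
  a subspace of \<^typ>\<open>'a \<times> real\<close>.\<close>

definition dominated_linear_graph :: "('a::real_vector \<Rightarrow> real) \<Rightarrow> ('a \<times> real) set \<Rightarrow> bool" where
  "dominated_linear_graph p G \<longleftrightarrow> subspace G \<and> (\<forall>(x, a) \<in> G. a \<le> p x)"

lemma dominated_linear_graph_le:
  "dominated_linear_graph p G \<Longrightarrow> (x, a) \<in> G \<Longrightarrow> a \<le> p x"
  by (auto simp: dominated_linear_graph_def)

lemma dominated_linear_graph_unique:
  assumes p: "sublinear p" and G: "dominated_linear_graph p G" and "(x, a) \<in> G" "(x, b) \<in> G"
  shows "a = b"
proof -
  have sub: "subspace G" using G by (simp add: dominated_linear_graph_def)
  have "(0, a - b) \<in> G" "(0, b - a) \<in> G"
    using subspace_diff[OF sub assms(3) assms(4)] subspace_diff[OF sub assms(4) assms(3)] by simp_all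
  then have "a - b \<le> 0" "b - a \<le> 0"
    using dominated_linear_graph_le[OF G] sublinear_zero[OF p] by fastforce+
  then show ?thesis by simp
qed

lemma dominated_linear_graph_Union_chain:
  assumes "C \<noteq> {}" and "subset.chain {G. dominated_linear_graph p G} C"
  shows "dominated_linear_graph p (\<Union>C)"
proof -
  have C: "\<And>G. G \<in> C \<Longrightarrow> dominated_linear_graph p G"
    and comparable: "\<And>G H. G \<in> C \<Longrightarrow> H \<in> C \<Longrightarrow> G \<subseteq> H \<or> H \<subseteq> G"
    using assms(2) by (auto simp: subset.chain_def)
  have sub: "\<And>G. G \<in> C \<Longrightarrow> subspace G" using C by (simp add: dominated_linear_graph_def)
  have "subspace (\<Union>C)"
  proof (rule subspaceI)
    show "0 \<in> \<Union>C" using assms(1) sub subspace_0 by blast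
    show "u + v \<in> \<Union>C" if uv: "u \<in> \<Union>C" "v \<in> \<Union>C" for u v
    proof -
      obtain G H where "G \<in> C" "H \<in> C" "u \<in> G" "v \<in> H" using uv by blast
      then show ?thesis
        using comparable[of G H] sub subspace_add by blast
    qed
    show "c *\<^sub>R u \<in> \<Union>C" if "u \<in> \<Union>C" for c u
      using that sub subspace_scale by blast
  qed
  then show ?thesis
    using C by (auto simp: dominated_linear_graph_def)
qed

lemma dominated_linear_graph_span_insert:
  assumes p: "sublinear p" and G: "dominated_linear_graph p G"
    and c_lower: "\<And>u b. (u, b) \<in> G \<Longrightarrow> b - p (u - z) \<le> c"
    and c_upper: "\<And>u b. (u, b) \<in> G \<Longrightarrow> c \<le> p (u + z) - b"
  shows "dominated_linear_graph p (span (insert (z, c) G))"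
proof -
  have sub: "subspace G" using G by (simp add: dominated_linear_graph_def)
  have "e \<le> p y" if ye: "(y, e) \<in> span (insert (z, c) G)" for y e
  proof -
    obtain k where "(y, e) - k *\<^sub>R (z, c) \<in> span G"
      using ye span_breakdown_eq by blast
    then have yk: "(y - k *\<^sub>R z, e - k * c) \<in> G"
      by (simp add: span_eq_iff[THEN iffD2, OF sub])
    show ?thesis
    proof (cases k "0::real" rule: linorder_cases)
      case equal
      then show ?thesis using dominated_linear_graph_le[OF G yk] by simp
    next
      case greater
      have "(1 / k) *\<^sub>R (y - k *\<^sub>R z, e - k * c) = ((1 / k) *\<^sub>R y - z, e / k - c)"
        using greater by (simp add: scaleR_diff_right diff_divide_distrib)
      then have "c \<le> p ((1 / k) *\<^sub>R y - z + z) - (e / k - c)"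
        using c_upper[of "(1 / k) *\<^sub>R y - z" "e / k - c"] subspace_scale[OF sub yk, of "1 / k"]
        by simp
      then have "e / k \<le> p y / k"
        using sublinear_scaleR[OF p, of "1 / k" y] greater by simp
      then show ?thesis using greater by (simp add: field_simps)
    next
      case less
      have "(- 1 / k) *\<^sub>R (y - k *\<^sub>R z, e - k * c) = ((- 1 / k) *\<^sub>R y + z, c - e / k)"
        using less by (simp add: scaleR_diff_right diff_divide_distrib)
      then have "c - e / k - p ((- 1 / k) *\<^sub>R y + z - z) \<le> c"
        using c_lower[of "(- 1 / k) *\<^sub>R y + z" "c - e / k"] subspace_scale[OF sub yk, of "- 1 / k"]
        by simp
      then have "- e / k \<le> - p y / k"
        using sublinear_scaleR[OF p, of "- 1 / k" y] less by simp
      then show ?thesis using less by (simp add: field_simps)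
    qed
  qed
  then show ?thesis by (auto simp: dominated_linear_graph_def)
qed

lemma dominated_linear_graph_extend:
  assumes p: "sublinear p" and G: "dominated_linear_graph p G"
  obtains c where "dominated_linear_graph p (span (insert (z, c) G))"
proof -
  have sub: "subspace G" using G by (simp add: dominated_linear_graph_def)
  have "(0, 0) \<in> G" using subspace_0[OF sub] by (simp add: zero_prod_def)
  have gap: "b - p (u - z) \<le> p (v + z) - d" if "(u, b) \<in> G" "(v, d) \<in> G" for u b v d
  proof -
    have "(u + v, b + d) \<in> G" using subspace_add[OF sub that] by simp
    then have "b + d \<le> p ((u - z) + (v + z))"
      using dominated_linear_graph_le[OF G] by simp
    then show ?thesis using sublinear_add[OF p, of "u - z" "v + z"] by linarith
  qed
  define L where "L = {b - p (u - z) | u b. (u, b) \<in> G}"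
  have "L \<noteq> {}" "bdd_above L"
    using \<open>(0, 0) \<in> G\<close> gap by (fastforce simp: L_def bdd_above_def)+
  then have "b - p (u - z) \<le> Sup L" "Sup L \<le> p (u + z) - b" if "(u, b) \<in> G" for u b
    using that gap by (auto simp: L_def intro!: cSup_upper cSup_least)
  then show ?thesis
    using that dominated_linear_graph_span_insert[OF p G] by blast
qed

lemma dominated_linear_graph_maximal_total:
  assumes p: "sublinear p" and M: "dominated_linear_graph p M"
    and M_max: "\<And>G. dominated_linear_graph p G \<Longrightarrow> M \<subseteq> G \<Longrightarrow> G = M"
  shows "\<exists>a. (x, a) \<in> M"
proof -
  obtain c where "dominated_linear_graph p (span (insert (x, c) M))"
    using dominated_linear_graph_extend[OF p M] .
  moreover have "M \<subseteq> span (insert (x, c) M)"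
    by (auto intro: span_base)
  ultimately have "span (insert (x, c) M) = M"
    by (rule M_max)
  then show ?thesis by (auto intro: span_base)
qed

lemma dominated_linear_graph_total_linear:
  assumes p: "sublinear p" and M: "dominated_linear_graph p M" and total: "\<And>x. \<exists>a. (x, a) \<in> M"
  obtains F where "linear F" "\<And>x. F x \<le> p x" "\<And>x. (x, F x) \<in> M"
proof -
  have "\<exists>!a. (x, a) \<in> M" for x
    using total dominated_linear_graph_unique[OF p M] by blast
  then have "\<exists>F. \<forall>x. (x, F x) \<in> M" by metis
  then obtain F where F_in: "\<And>x. (x, F x) \<in> M" by blast
  have F_eq: "F x = a" if "(x, a) \<in> M" for x a
    using dominated_linear_graph_unique[OF p M F_in that] .
  have sub: "subspace M" using M by (simp add: dominated_linear_graph_def)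
  have "linear F"
  proof (rule linearI)
    show "F (x + y) = F x + F y" for x y
      using subspace_add[OF sub F_in F_in] F_eq by simp
    show "F (c *\<^sub>R x) = c *\<^sub>R F x" for c x
      using subspace_scale[OF sub F_in, of c] F_eq by simp
  qed
  then show ?thesis
    using that F_in dominated_linear_graph_le[OF M F_in] by blast
qed

theorem sublinear_Hahn_Banach:
  assumes p: "sublinear p"
  obtains F where "linear F" "\<And>x. F x \<le> p x" "F z = p z"
proof -
  define A where "A = {G. dominated_linear_graph p G \<and> (z, p z) \<in> G}"
  have "a \<le> p x" if "(x, a) \<in> span {(z, p z)}" for x a
    using that sublinear_scaleR_ge[OF p, of _ z] by (auto simp: span_singleton)
  then have "span {(z, p z)} \<in> A"
    by (auto simp: A_def dominated_linear_graph_def span_base)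
  moreover have "\<Union>C \<in> A" if C: "C \<noteq> {}" "subset.chain A C" for C
  proof -
    have "subset.chain {G. dominated_linear_graph p G} C"
      using C(2) by (auto simp: subset.chain_def A_def)
    then have "dominated_linear_graph p (\<Union>C)"
      by (rule dominated_linear_graph_Union_chain[OF C(1)])
    moreover have "(z, p z) \<in> \<Union>C"
      using C by (auto simp: subset.chain_def A_def)
    ultimately show ?thesis by (simp add: A_def)
  qed
  ultimately obtain M where "M \<in> A" and M_max: "\<And>G. G \<in> A \<Longrightarrow> M \<subseteq> G \<Longrightarrow> G = M"
    using subset_Zorn_nonempty[of A] by blast
  then have M: "dominated_linear_graph p M" and "(z, p z) \<in> M" by (simp_all add: A_def)
  have "\<exists>a. (x, a) \<in> M" for x
    using dominated_linear_graph_maximal_total[OF p M] M_max \<open>(z, p z) \<in> M\<close> by (auto simp: A_def)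
  then obtain F where "linear F" "\<And>x. F x \<le> p x" "\<And>x. (x, F x) \<in> M"
    using dominated_linear_graph_total_linear[OF p M] by blast
  then show ?thesis
    using that dominated_linear_graph_unique[OF p M \<open>(z, p z) \<in> M\<close>] by metis
qed

section \<open>Separation and the weak topology\<close>

lemma infdist_greatest: "A \<noteq> {} \<Longrightarrow> (\<And>a. a \<in> A \<Longrightarrow> d \<le> dist x a) \<Longrightarrow> d \<le> infdist x A"
  by (simp add: infdist_notempty cINF_greatest)

lemma infdist_convex_cone_add:
  fixes K :: "'a::real_normed_vector set"
  assumes K: "convex_cone K"
  shows "infdist (x + y) K \<le> infdist x K + infdist y K"
proof -
  have "K \<noteq> {}" using K by (rule convex_cone_nonempty)
  have "infdist (x + y) K \<le> dist x k + dist y l" if "k \<in> K" "l \<in> K" for k l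
  proof -
    have "infdist (x + y) K \<le> dist (x + y) (k + l)"
      using convex_cone_add[OF K that] by (rule infdist_le)
    also have "\<dots> \<le> dist x k + dist y l"
      unfolding dist_norm using norm_triangle_ineq[of "x - k" "y - l"] by (simp add: algebra_simps)
    finally show ?thesis .
  qed
  then have "infdist (x + y) K - dist y l \<le> infdist x K" if "l \<in> K" for l
    using that \<open>K \<noteq> {}\<close> by (force intro: infdist_greatest)
  then have "infdist (x + y) K - infdist x K \<le> infdist y K"
    using \<open>K \<noteq> {}\<close> by (force intro: infdist_greatest)
  then show ?thesis by simp
qed

lemma infdist_convex_cone_scaleR:
  fixes K :: "'a::real_normed_vector set"
  assumes K: "convex_cone K" and t: "0 < t"
  shows "infdist (t *\<^sub>R x) K = t * infdist x K"
proof -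
  have "K \<noteq> {}" using K by (rule convex_cone_nonempty)
  have "infdist (t *\<^sub>R x) K / t \<le> dist x k" if "k \<in> K" for k
  proof -
    have "infdist (t *\<^sub>R x) K \<le> dist (t *\<^sub>R x) (t *\<^sub>R k)"
      using t convex_cone_scaleR[OF K _ that] by (simp add: infdist_le)
    then show ?thesis
      using t by (simp add: dist_norm pos_divide_le_eq mult.commute flip: scaleR_diff_right)
  qed
  then have "infdist (t *\<^sub>R x) K / t \<le> infdist x K"
    by (rule infdist_greatest[OF \<open>K \<noteq> {}\<close>])
  moreover have "t * infdist x K \<le> dist (t *\<^sub>R x) k" if "k \<in> K" for k
  proof -
    have "infdist x K \<le> dist x ((1 / t) *\<^sub>R k)"
      using t convex_cone_scaleR[OF K _ that] by (simp add: infdist_le)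
    also have "t *\<^sub>R x - k = t *\<^sub>R (x - (1 / t) *\<^sub>R k)"
      using t by (simp add: scaleR_diff_right)
    then have "dist x ((1 / t) *\<^sub>R k) = dist (t *\<^sub>R x) k / t"
      using t by (simp add: dist_norm)
    finally show ?thesis
      using t by (simp add: pos_le_divide_eq mult.commute)
  qed
  then have "t * infdist x K \<le> infdist (t *\<^sub>R x) K"
    by (rule infdist_greatest[OF \<open>K \<noteq> {}\<close>])
  ultimately show ?thesis
    using t by (simp add: divide_le_eq mult.commute)
qed

lemma sublinear_infdist_convex_cone:
  fixes K :: "'a::real_normed_vector set"
  shows "convex_cone K \<Longrightarrow> sublinear (\<lambda>x. infdist x K)"
  unfolding sublinear_def using infdist_convex_cone_add infdist_convex_cone_scaleR by blast

lemma infdist_conic_hull_ge: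
  fixes D :: "'a::real_normed_vector set"
  assumes D: "convex D" and "v \<in> D" and bound: "\<And>u. u \<in> D \<Longrightarrow> \<delta> \<le> norm u"
  shows "\<delta> \<le> infdist (- v) (conic hull D)"
proof (rule infdist_greatest)
  show "conic hull D \<noteq> {}" using \<open>v \<in> D\<close> by (auto simp: conic_hull_eq_empty)
next
  fix k assume "k \<in> conic hull D"
  then obtain t u where k: "k = t *\<^sub>R u" "0 \<le> t" "u \<in> D" by (auto simp: conic_hull_explicit)
  have "(1 / (1 + t)) *\<^sub>R v + (t / (1 + t)) *\<^sub>R u \<in> D"
    using k \<open>v \<in> D\<close> by (intro convexD[OF D]) (auto simp: add_divide_distrib[symmetric])
  then have "\<delta> \<le> norm ((1 / (1 + t)) *\<^sub>R v + (t / (1 + t)) *\<^sub>R u)" by (rule bound)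
  also have "(1 / (1 + t)) *\<^sub>R v + (t / (1 + t)) *\<^sub>R u = (1 / (1 + t)) *\<^sub>R (v + t *\<^sub>R u)"
    by (simp add: scaleR_add_right)
  also have "norm \<dots> = norm (v + t *\<^sub>R u) / (1 + t)"
    using k by simp
  also have "\<dots> \<le> norm (v + t *\<^sub>R u)"
    using k by (simp add: divide_le_eq distrib_left)
  also have "\<dots> = dist (- v) k"
    by (simp add: k dist_norm norm_minus_commute[of "- v"] add.commute)
  finally show "\<delta> \<le> dist (- v) k" .
qed

lemma bounded_linear_le_infdist:
  assumes "linear F" and "0 \<in> K" and F_le: "\<And>y. F y \<le> infdist y K"
  shows "bounded_linear F"
proof -
  have "\<bar>F y\<bar> \<le> norm y" for y
    using F_le[of y] F_le[of "- y"] infdist_le[OF \<open>0 \<in> K\<close>, of y] infdist_le[OF \<open>0 \<in> K\<close>, of "- y"]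
      linear_neg[OF \<open>linear F\<close>, of y]
    by (simp add: abs_le_iff)
  then show ?thesis
    using \<open>linear F\<close> by (auto intro!: bounded_linear_intro[of F 1] linear_add linear_scale)
qed

text \<open>The dominating sublinear functional is the distance to the cone generated by \<open>D\<close>.\<close>

lemma separating_functional_norm_ge:
  fixes D :: "'a::real_normed_vector set"
  assumes "convex D" and "v \<in> D" and "\<And>u. u \<in> D \<Longrightarrow> \<delta> \<le> norm u"
  obtains F :: "'a \<Rightarrow> real" where "bounded_linear F" "\<And>u. u \<in> D \<Longrightarrow> F u \<le> 0" "\<delta> \<le> F (- v)"
proof -
  define K where "K = conic hull D"
  have K: "convex_cone K"
    using assms(1,2) by (auto simp: K_def convex_cone_def convex_conic_hull conic_conic_hull conic_hull_eq_empty)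
  obtain F where "linear F" and F_le: "\<And>y. F y \<le> infdist y K" and "F (- v) = infdist (- v) K"
    using sublinear_Hahn_Banach[OF sublinear_infdist_convex_cone[OF K], where z = "- v"] by blast
  show ?thesis
  proof (rule that)
    show "bounded_linear F"
      using \<open>linear F\<close> convex_cone_contains_0[OF K] F_le by (rule bounded_linear_le_infdist)
    show "F u \<le> 0" if "u \<in> D" for u
      using F_le[of u] that hull_subset[of D conic] by (auto simp: K_def)
    show "\<delta> \<le> F (- v)"
      using \<open>F (- v) = infdist (- v) K\<close> infdist_conic_hull_ge[OF assms] by (simp add: K_def)
  qed
qed

lemma separating_functional_closed_convex:
  fixes C :: "'a::real_normed_vector set"
  assumes "closed C" and "convex C" and "x \<notin> C"
  shows "\<exists>(F :: 'a \<Rightarrow> real) a. bounded_linear F \<and> (\<forall>c\<in>C. F c \<le> a) \<and> a < F x"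
proof (cases "C = {}")
  case True
  then show ?thesis
    by (intro exI[of _ "\<lambda>_. 0"] exI[of _ "- 1"]) (simp add: bounded_linear_zero)
next
  case False
  then obtain c0 where "c0 \<in> C" by blast
  define \<delta> where "\<delta> = infdist x C / 2"
  have "0 < \<delta>" using infdist_pos_not_in_closed[OF assms(1) False assms(3)] by (simp add: \<delta>_def)
  \<comment> \<open>Thickening \<open>C\<close> by \<open>\<delta>\<close> is what makes the separation strict.\<close>
  define D where "D = {c + w - x | c w. c \<in> C \<and> norm w \<le> \<delta>}"
  have "D = (\<lambda>v. v - x) ` ((\<lambda>(c, w). c + w) ` (C \<times> cball 0 \<delta>))"
    by (auto simp: D_def image_iff) (use mem_cball_0 in blast)+
  moreover have "linear (\<lambda>(c, w). c + w :: 'a)"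
    by (auto intro!: linearI simp: algebra_simps)
  ultimately have "convex D"
    using assms(2) by (simp add: convex_translation_subtract convex_linear_image convex_Times)
  have D_norm: "\<delta> \<le> norm u" if "u \<in> D" for u
  proof -
    obtain c w where u: "u = c + w - x" "c \<in> C" "norm w \<le> \<delta>" using \<open>u \<in> D\<close> by (auto simp: D_def)
    have "2 * \<delta> \<le> norm (c - x)"
      using infdist_le[OF u(2), of x] by (simp add: \<delta>_def dist_norm norm_minus_commute)
    also have "\<dots> \<le> norm u + norm w"
      using norm_triangle_ineq4[of u w] by (simp add: u(1))
    finally show ?thesis using u(3) by simp
  qed
  have "c0 - x \<in> D" using \<open>c0 \<in> C\<close> \<open>0 < \<delta>\<close> by (force simp: D_def)
  then obtain F :: "'a \<Rightarrow> real"
    where "bounded_linear F" and F_D: "\<And>u. u \<in> D \<Longrightarrow> F u \<le> 0" and "\<delta> \<le> F (- (c0 - x))"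
    using separating_functional_norm_ge[OF \<open>convex D\<close> _ D_norm] by blast
  define z where "z = x - c0"
  have "\<delta> \<le> F z" using \<open>\<delta> \<le> F (- (c0 - x))\<close> by (simp add: z_def)
  have "z \<noteq> 0" using \<open>c0 \<in> C\<close> assms(3) by (auto simp: z_def)
  define \<gamma> where "\<gamma> = \<delta> * \<delta> / norm z"
  have "0 < \<gamma>" using \<open>0 < \<delta>\<close> \<open>z \<noteq> 0\<close> by (simp add: \<gamma>_def)
  have "F c \<le> F x - \<gamma>" if "c \<in> C" for c
  proof -
    define w where "w = (\<delta> / norm z) *\<^sub>R z"
    have "c + w - x \<in> D"
      using that \<open>0 < \<delta>\<close> by (force simp: D_def w_def)
    moreover have "F (c + w - x) = F c + (\<delta> / norm z) * F z - F x"
      using \<open>bounded_linear F\<close> by (simp add: w_def linear_simps)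
    moreover have "\<gamma> \<le> (\<delta> / norm z) * F z"
      unfolding \<gamma>_def times_divide_eq_left[symmetric]
      using \<open>\<delta> \<le> F z\<close> \<open>0 < \<delta>\<close> by (intro mult_left_mono) auto
    ultimately show ?thesis using F_D[of "c + w - x"] by linarith
  qed
  then show ?thesis
    using \<open>bounded_linear F\<close> \<open>0 < \<gamma>\<close> by (intro exI[of _ F] exI[of _ "F x - \<gamma>"]) auto
qed

lemma topspace_weak_topology: "topspace weak_topology = UNIV"
proof -
  have "UNIV = (\<lambda>_::'a. 0 :: real) -` UNIV" by simp
  then have "UNIV \<in> {f -` U | (f :: 'a \<Rightarrow> real) U. bounded_linear f \<and> open U}"
    using bounded_linear_zero by blast
  then show ?thesis
    unfolding weak_topology_def topology_generated_by_topspace by blast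
qed

lemma openin_weak_topology_halfspace:
  fixes F :: "'a::real_normed_vector \<Rightarrow> real"
  assumes "bounded_linear F"
  shows "openin weak_topology {x. a < F x}"
proof -
  have "{x. a < F x} = F -` {a<..}" by auto
  then have "{x. a < F x} \<in> {f -` U | (f :: 'a \<Rightarrow> real) U. bounded_linear f \<and> open U}"
    using assms by (intro CollectI exI[of _ F] exI[of _ "{a<..}"]) simp
  then show ?thesis
    unfolding weak_topology_def by (rule topology_generated_by_Basis)
qed

lemma closedin_weak_topology_closed_convex:
  fixes C :: "'a::real_normed_vector set"
  assumes "closed C" and "convex C"
  shows "closedin weak_topology C"
proof -
  have "openin weak_topology (- C)"
  proof (subst openin_subopen, intro ballI)
    fix x assume "x \<in> - C"
    then obtain F :: "'a \<Rightarrow> real" and a where "bounded_linear F" "\<forall>c\<in>C. F c \<le> a" "a < F x"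
      using separating_functional_closed_convex[OF assms] by blast
    then show "\<exists>U. openin weak_topology U \<and> x \<in> U \<and> U \<subseteq> - C"
      by (intro exI[of _ "{x. a < F x}"] conjI openin_weak_topology_halfspace) force+
  qed
  then show ?thesis
    by (simp add: closedin_def topspace_weak_topology Compl_eq_Diff_UNIV)
qed

lemma compactin_Inter_nested:
  fixes E :: "'i::linorder \<Rightarrow> 'a set"
  assumes "compactin X K" and "I \<noteq> {}"
    and closed: "\<And>i. i \<in> I \<Longrightarrow> closedin X (E i)"
    and nested: "\<And>i j. i \<in> I \<Longrightarrow> j \<in> I \<Longrightarrow> i \<le> j \<Longrightarrow> E i \<subseteq> E j"
    and meets: "\<And>i. i \<in> I \<Longrightarrow> K \<inter> E i \<noteq> {}"
  shows "K \<inter> (\<Inter>i\<in>I. E i) \<noteq> {}"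
proof -
  define \<U> where "\<U> = (\<lambda>i. K \<inter> E i) ` I"
  have "compact_space (subtopology X K)"
    using assms(1) by (simp add: compact_space_subtopology)
  moreover have "\<forall>C\<in>\<U>. closedin (subtopology X K) C"
    using closed by (auto simp: \<U>_def closedin_subtopology_Int_closed)
  moreover have "\<Inter>\<F> \<noteq> {}" if \<F>: "finite \<F>" "\<F> \<subseteq> \<U>" for \<F>
  proof (cases "\<F> = {}")
    case False
    obtain J where J: "J \<subseteq> I" "finite J" "\<F> = (\<lambda>i. K \<inter> E i) ` J"
      using \<F> finite_subset_image[of \<F> "\<lambda>i. K \<inter> E i" I] by (auto simp: \<U>_def)
    then have "J \<noteq> {}" using False by auto
    then have "Min J \<in> J" using J(2) by simp
    have "E (Min J) \<subseteq> E j" if "j \<in> J" for j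
      using nested[of "Min J" j] J(1,2) \<open>Min J \<in> J\<close> that by auto
    then have "K \<inter> E (Min J) \<subseteq> \<Inter>\<F>"
      unfolding J(3) by blast
    moreover have "K \<inter> E (Min J) \<noteq> {}"
      using J(1) \<open>Min J \<in> J\<close> meets by auto
    ultimately show ?thesis by blast
  qed simp
  ultimately have "\<Inter>\<U> \<noteq> {}"
    unfolding compact_space_fip by blast
  then show ?thesis
    using \<open>I \<noteq> {}\<close> by (auto simp: \<U>_def)
qed

section \<open>Asymptotic centres\<close>

text \<open>\<open>limsup_norm_le x y t\<close> says \<open>limsup n. norm (x n - y) \<le> t\<close>, phrased without
  extended reals.\<close>

definition limsup_norm_le :: "(nat \<Rightarrow> 'a::real_normed_vector) \<Rightarrow> 'a \<Rightarrow> real \<Rightarrow> bool" where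
  "limsup_norm_le x y t \<longleftrightarrow> (\<forall>e>0. eventually (\<lambda>n. norm (x n - y) \<le> t + e) sequentially)"

lemma limsup_norm_leD:
  "limsup_norm_le x y t \<Longrightarrow> 0 < e \<Longrightarrow> eventually (\<lambda>n. norm (x n - y) \<le> t + e) sequentially"
  by (simp add: limsup_norm_le_def)

lemma limsup_norm_leI:
  assumes "limsup (\<lambda>n. ereal (norm (x n - y))) < ereal t"
  shows "limsup_norm_le x y t"
  unfolding limsup_norm_le_def
proof (intro allI impI)
  fix e :: real assume "0 < e"
  have "eventually (\<lambda>n. ereal (norm (x n - y)) < ereal t) sequentially"
    using Limsup_lessD[OF assms] .
  then show "eventually (\<lambda>n. norm (x n - y) \<le> t + e) sequentially"
    by eventually_elim (use \<open>0 < e\<close> in simp)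
qed

lemma limsup_norm_le_nonneg:
  assumes "limsup_norm_le x y t" shows "0 \<le> t"
proof (rule ccontr)
  assume "\<not> 0 \<le> t"
  then have "eventually (\<lambda>n. norm (x n - y) \<le> t + (- t / 2)) sequentially"
    using limsup_norm_leD[OF assms, of "- t / 2"] by simp
  then obtain N where "\<forall>n\<ge>N. norm (x n - y) \<le> t / 2" by (auto simp: eventually_sequentially)
  then have "norm (x N - y) \<le> t / 2" by simp
  then show False using \<open>\<not> 0 \<le> t\<close> norm_ge_zero[of "x N - y"] by linarith
qed

lemma limsup_norm_le_mono:
  "limsup_norm_le x y t \<Longrightarrow> t \<le> s \<Longrightarrow> limsup_norm_le x y s"
  unfolding limsup_norm_le_def by (fastforce elim: eventually_mono)

lemma limsup_norm_le_greaterI: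
  assumes "\<And>s. t < s \<Longrightarrow> limsup_norm_le x y s"
  shows "limsup_norm_le x y t"
  unfolding limsup_norm_le_def
proof (intro allI impI)
  fix e :: real assume "0 < e"
  then show "eventually (\<lambda>n. norm (x n - y) \<le> t + e) sequentially"
    using limsup_norm_leD[OF assms[of "t + e / 2"], of "e / 2"] by (simp add: add.commute)
qed

lemma closed_limsup_norm_le: "closed {y. limsup_norm_le x y t}"
  unfolding closed_sequential_limits
proof (intro allI impI)
  fix ys l assume ys: "(\<forall>n. ys n \<in> {y. limsup_norm_le x y t}) \<and> ys \<longlonglongrightarrow> l"
  have "limsup_norm_le x l t"
    unfolding limsup_norm_le_def
  proof (intro allI impI)
    fix e :: real assume "0 < e"
    have "eventually (\<lambda>n. dist (ys n) l < e / 2) sequentially"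
      using tendstoD[of ys l sequentially "e / 2"] ys \<open>0 < e\<close> by simp
    then obtain k where "\<forall>n\<ge>k. dist (ys n) l < e / 2" by (auto simp: eventually_sequentially)
    then have k: "dist (ys k) l < e / 2" by simp
    have "eventually (\<lambda>n. norm (x n - ys k) \<le> t + e / 2) sequentially"
      using ys \<open>0 < e\<close> by (simp add: limsup_norm_leD)
    then show "eventually (\<lambda>n. norm (x n - l) \<le> t + e) sequentially"
    proof eventually_elim
      case (elim n)
      have "norm (x n - l) \<le> norm (x n - ys k) + dist (ys k) l"
        using norm_triangle_ineq[of "x n - ys k" "ys k - l"] by (simp add: dist_norm)
      then show ?case using elim k by simp
    qed
  qed
  then show "l \<in> {y. limsup_norm_le x y t}" by simp
qed

lemma convex_limsup_norm_le: "convex {y. limsup_norm_le x y t}"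
proof (rule convexI)
  fix y1 y2 and a b :: real
  assume y: "y1 \<in> {y. limsup_norm_le x y t}" "y2 \<in> {y. limsup_norm_le x y t}"
    and ab: "0 \<le> a" "0 \<le> b" "a + b = 1"
  have "limsup_norm_le x (a *\<^sub>R y1 + b *\<^sub>R y2) t"
    unfolding limsup_norm_le_def
  proof (intro allI impI)
    fix e :: real assume "0 < e"
    have "eventually (\<lambda>n. norm (x n - y1) \<le> t + e \<and> norm (x n - y2) \<le> t + e) sequentially"
      using y \<open>0 < e\<close> by (simp add: limsup_norm_leD eventually_conj)
    then show "eventually (\<lambda>n. norm (x n - (a *\<^sub>R y1 + b *\<^sub>R y2)) \<le> t + e) sequentially"
    proof eventually_elim
      case (elim n)
      have "x n - (a *\<^sub>R y1 + b *\<^sub>R y2) = a *\<^sub>R (x n - y1) + b *\<^sub>R (x n - y2)"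
        using ab(3) by (simp add: algebra_simps flip: scaleR_add_left)
      then have "norm (x n - (a *\<^sub>R y1 + b *\<^sub>R y2)) \<le> a * norm (x n - y1) + b * norm (x n - y2)"
        using norm_triangle_ineq[of "a *\<^sub>R (x n - y1)" "b *\<^sub>R (x n - y2)"] ab by simp
      also have "\<dots> \<le> a * (t + e) + b * (t + e)"
        using elim ab by (intro add_mono mult_left_mono) auto
      finally show ?case using ab(3) by (simp flip: distrib_right)
    qed
  qed
  then show "a *\<^sub>R y1 + b *\<^sub>R y2 \<in> {y. limsup_norm_le x y t}" by simp
qed

lemma limsup_norm_le_zero_LIMSEQ:
  assumes "limsup_norm_le x y 0" shows "x \<longlonglongrightarrow> y"
proof (rule LIMSEQ_I)
  fix e :: real assume "0 < e"
  then have "eventually (\<lambda>n. norm (x n - y) \<le> e / 2) sequentially"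
    using limsup_norm_leD[OF assms, of "e / 2"] by simp
  then obtain N where "\<forall>n\<ge>N. norm (x n - y) \<le> e / 2" by (auto simp: eventually_sequentially)
  then show "\<exists>N. \<forall>n\<ge>N. norm (x n - y) < e"
    using \<open>0 < e\<close> by force
qed

lemma weakly_compact_asymptotic_center:
  fixes Q :: "'a::real_normed_vector set"
  assumes "weakly_compact Q" and "y0 \<in> Q" and "limsup_norm_le x y0 t0"
  obtains y R where "y \<in> Q" "R \<le> t0" "limsup_norm_le x y R"
    "\<And>z t. z \<in> Q \<Longrightarrow> limsup_norm_le x z t \<Longrightarrow> R \<le> t"
proof -
  define S where "S = {t. \<exists>z\<in>Q. limsup_norm_le x z t}"
  define R where "R = Inf S"
  have "t0 \<in> S" using assms(2,3) by (auto simp: S_def)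
  have "bdd_below S" using limsup_norm_le_nonneg by (auto simp: S_def bdd_below_def)
  then have R_le: "R \<le> t" if "t \<in> S" for t
    using that by (simp add: R_def cInf_lower)
  have "Q \<inter> (\<Inter>t\<in>{R<..}. {y. limsup_norm_le x y t}) \<noteq> {}"
  proof (rule compactin_Inter_nested)
    show "compactin weak_topology Q" using assms(1) by (simp add: weakly_compact_def)
    show "{R<..} \<noteq> {}" by auto
    show "closedin weak_topology {y. limsup_norm_le x y t}" for t
      by (rule closedin_weak_topology_closed_convex[OF closed_limsup_norm_le convex_limsup_norm_le])
    show "{y. limsup_norm_le x y s} \<subseteq> {y. limsup_norm_le x y t}" if "s \<le> t" for s t
      using that limsup_norm_le_mono by blast
    show "Q \<inter> {y. limsup_norm_le x y t} \<noteq> {}" if t: "t \<in> {R<..}" for t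
    proof -
      obtain s where "s \<in> S" "s < t"
        using t \<open>t0 \<in> S\<close> cInf_lessD[of S t] by (auto simp: R_def)
      then show ?thesis
        using limsup_norm_le_mono[of x _ s t] by (force simp: S_def)
    qed
  qed
  then obtain y where "y \<in> Q" and "\<And>t. R < t \<Longrightarrow> limsup_norm_le x y t" by auto
  then have "limsup_norm_le x y R" by (blast intro: limsup_norm_le_greaterI)
  moreover have "R \<le> t0" using R_le[OF \<open>t0 \<in> S\<close>] .
  ultimately show ?thesis
    using that \<open>y \<in> Q\<close> R_le by (auto simp: S_def)
qed

lemma asym_radius_lessE:
  assumes "asym_radius Q x < ereal r"
  obtains y t where "y \<in> Q" "t < r" "limsup_norm_le x y t"
proof -
  obtain y where "y \<in> Q" and y: "limsup (\<lambda>n. ereal (norm (x n - y))) < ereal r"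
    using assms by (auto simp: asym_radius_def INF_less_iff)
  then obtain l where l: "limsup (\<lambda>n. ereal (norm (x n - y))) < l" "l < ereal r"
    using dense by blast
  moreover have "l \<noteq> - \<infinity>" using l(1) by auto
  ultimately obtain t where "l = ereal t" by (cases l) auto
  then show ?thesis
    using that[OF \<open>y \<in> Q\<close> _ limsup_norm_leI] l by auto
qed

section \<open>Local asymptotic pointwise contractions\<close>

lemma convex_segment_subdivision:
  fixes p q :: "'a::real_normed_vector"
  assumes "convex Q" and "p \<in> Q" and "q \<in> Q" and "0 < r"
  obtains k w where "0 < k" "w 0 = p" "w k = q" "\<And>i. i \<le> k \<Longrightarrow> w i \<in> Q"
    "\<And>i. norm (w i - w (Suc i)) = norm (p - q) / k" "norm (p - q) / k < r"
proof -
  obtain k :: nat where k: "norm (p - q) / r < k" using reals_Archimedean2 by blast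
  moreover have "0 \<le> norm (p - q) / r" using assms(4) by simp
  ultimately have "0 < k" by linarith
  define w where "w i = p + (real i / k) *\<^sub>R (q - p)" for i
  have "w i \<in> Q" if "i \<le> k" for i
  proof -
    have "w i = (1 - real i / k) *\<^sub>R p + (real i / k) *\<^sub>R q"
      by (simp add: w_def algebra_simps)
    then show ?thesis
      using that \<open>0 < k\<close> convexD[OF assms(1-3), of "1 - real i / k" "real i / k"] by simp
  qed
  moreover have "norm (w i - w (Suc i)) = norm (p - q) / k" for i
  proof -
    have "w i - w (Suc i) = (1 / k) *\<^sub>R (p - q)"
      by (simp add: w_def algebra_simps add_divide_distrib)
    then show ?thesis by simp
  qed
  moreover have "norm (p - q) / k < r"
    using k \<open>0 < k\<close> assms(4) by (simp add: field_simps)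
  ultimately show ?thesis
    using that[of k w] \<open>0 < k\<close> by (simp add: w_def)
qed

locale local_asymptotic_pointwise_contraction =
  fixes Q :: "'a::real_normed_vector set" and T :: "'a \<Rightarrow> 'a"
    and r :: real and \<beta> :: "'a \<Rightarrow> real" and \<beta>s :: "nat \<Rightarrow> 'a \<Rightarrow> real"
  assumes r_pos: "0 < r"
    and beta_less_1: "\<And>p. p \<in> Q \<Longrightarrow> \<beta> p < 1"
    and beta_limit: "\<And>p. p \<in> Q \<Longrightarrow> (\<lambda>n. \<beta>s n p) \<longlonglongrightarrow> \<beta> p"
    and maps_to: "T ` Q \<subseteq> Q"
    and contraction: "\<And>p q n. p \<in> Q \<Longrightarrow> q \<in> Q \<Longrightarrow> 1 \<le> n \<Longrightarrow> norm (p - q) < r \<Longrightarrow>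
           norm ((T ^^ n) p - (T ^^ n) q) \<le> \<beta>s n p * norm (p - q)"
begin

lemma funpow_in: "p \<in> Q \<Longrightarrow> (T ^^ n) p \<in> Q"
  using maps_to by (induction n) auto

lemma eventually_beta_less_1: "p \<in> Q \<Longrightarrow> eventually (\<lambda>n. \<beta>s n p < 1) sequentially"
  using order_tendstoD(2)[OF beta_limit beta_less_1] .

lemma fixed_point_unique:
  assumes "convex Q" and "p \<in> Q" "q \<in> Q" and "T p = p" "T q = q"
  shows "p = q"
proof (rule ccontr)
  assume "p \<noteq> q"
  define d where "d = norm (p - q)"
  have "0 < d" using \<open>p \<noteq> q\<close> by (simp add: d_def)
  obtain k w where "0 < k" "w 0 = p" "w k = q" and w_in: "\<And>i. i \<le> k \<Longrightarrow> w i \<in> Q"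
    and step: "\<And>i. norm (w i - w (Suc i)) = d / k" and "d / k < r"
    using convex_segment_subdivision[OF assms(1-3) r_pos] unfolding d_def by metis
  have "eventually (\<lambda>n. 1 \<le> n \<and> (\<forall>i\<in>{..<k}. \<beta>s n (w i) < 1)) sequentially"
    using w_in eventually_beta_less_1
    by (auto intro!: eventually_conj eventually_ge_at_top eventually_ball_finite)
  then obtain n where "\<forall>m\<ge>n. 1 \<le> m \<and> (\<forall>i\<in>{..<k}. \<beta>s m (w i) < 1)"
    by (auto simp: eventually_sequentially)
  then have "1 \<le> n" and beta_n: "\<And>i. i < k \<Longrightarrow> \<beta>s n (w i) < 1" by auto
  have fixed: "(T ^^ m) p = p" "(T ^^ m) q = q" for m
    using assms(4,5) by (induction m) auto
  have "d = norm (\<Sum>i<k. (T ^^ n) (w i) - (T ^^ n) (w (Suc i)))"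
    using sum_lessThan_telescope'[of "\<lambda>i. (T ^^ n) (w i)" k]
    by (simp add: \<open>w 0 = p\<close> \<open>w k = q\<close> fixed d_def)
  also have "\<dots> \<le> (\<Sum>i<k. norm ((T ^^ n) (w i) - (T ^^ n) (w (Suc i))))"
    by (rule norm_sum)
  also have "\<dots> \<le> (\<Sum>i<k. \<beta>s n (w i) * (d / k))"
    using contraction[OF w_in w_in \<open>1 \<le> n\<close>] step \<open>d / k < r\<close>
    by (intro sum_mono) (metis Suc_leI lessThan_iff less_imp_le_nat)
  also have "\<dots> < (\<Sum>i<k. 1 * (d / k))"
    using beta_n \<open>0 < d\<close> \<open>0 < k\<close> by (intro sum_strict_mono mult_strict_right_mono) auto
  also have "\<dots> = d" using \<open>0 < k\<close> by simp
  finally show False by simp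
qed

lemma limsup_norm_le_orbit_funpow:
  assumes "q0 \<in> Q" "y \<in> Q" and "1 \<le> m"
    and y: "limsup_norm_le (\<lambda>n. (T ^^ n) q0) y R" and "R < r"
    and "\<beta>s m y \<le> c" "0 \<le> c"
  shows "limsup_norm_le (\<lambda>n. (T ^^ n) q0) ((T ^^ m) y) (c * R)"
  unfolding limsup_norm_le_def
proof (intro allI impI)
  fix e :: real assume "0 < e"
  define e' where "e' = min (e / (1 + c)) ((r - R) / 2)"
  have "0 < e'" using \<open>0 < e\<close> \<open>R < r\<close> \<open>0 \<le> c\<close> by (simp add: e'_def)
  have "e' \<le> e / (1 + c)" "e' \<le> (r - R) / 2" unfolding e'_def by linarith+
  then have "e' + e' * c \<le> e" "R + e' < r"
    using \<open>0 \<le> c\<close> \<open>R < r\<close> by (simp_all add: pos_le_divide_eq ring_distribs)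
  then have "c * e' \<le> e" using \<open>0 < e'\<close> by (simp add: mult.commute)
  have "0 \<le> R" using y by (rule limsup_norm_le_nonneg)
  have "eventually (\<lambda>n. norm ((T ^^ n) q0 - y) \<le> R + e') sequentially"
    using limsup_norm_leD[OF y \<open>0 < e'\<close>] .
  then have "eventually (\<lambda>n. norm ((T ^^ (n + m)) q0 - (T ^^ m) y) \<le> c * R + e) sequentially"
  proof eventually_elim
    case (elim n)
    have "norm ((T ^^ (n + m)) q0 - (T ^^ m) y) = norm ((T ^^ m) y - (T ^^ m) ((T ^^ n) q0))"
      by (simp add: add.commute[of n m] funpow_add norm_minus_commute)
    also have "\<dots> \<le> \<beta>s m y * norm (y - (T ^^ n) q0)"
      using elim \<open>R + e' < r\<close> funpow_in[OF \<open>q0 \<in> Q\<close>]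
      by (intro contraction[OF \<open>y \<in> Q\<close> _ \<open>1 \<le> m\<close>]) (simp_all add: norm_minus_commute)
    also have "\<dots> \<le> c * (R + e')"
      using elim \<open>\<beta>s m y \<le> c\<close> \<open>0 \<le> c\<close>
      by (intro mult_mono) (simp_all add: norm_minus_commute)
    also have "\<dots> \<le> c * R + e"
      using \<open>c * e' \<le> e\<close> by (simp add: distrib_left)
    finally show ?case .
  qed
  then show "eventually (\<lambda>n. norm ((T ^^ n) q0 - (T ^^ m) y) \<le> c * R + e) sequentially"
    by (subst eventually_sequentially_seg[symmetric, of _ m])
qed

lemma orbit_asymptotic_center_radius_zero:
  assumes "q0 \<in> Q" "y \<in> Q"
    and y: "limsup_norm_le (\<lambda>n. (T ^^ n) q0) y R" and "R < r"
    and minimal: "\<And>z t. z \<in> Q \<Longrightarrow> limsup_norm_le (\<lambda>n. (T ^^ n) q0) z t \<Longrightarrow> R \<le> t"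
  shows "R = 0"
proof -
  obtain m where "1 \<le> m" "\<beta>s m y < 1"
    using eventually_conj[OF eventually_ge_at_top eventually_beta_less_1[OF \<open>y \<in> Q\<close>]]
    by (auto simp: eventually_sequentially)
  define c where "c = max (\<beta>s m y) 0"
  have "c < 1" using \<open>\<beta>s m y < 1\<close> by (simp add: c_def)
  have "R \<le> c * R"
    using minimal[OF funpow_in[OF \<open>y \<in> Q\<close>]]
      limsup_norm_le_orbit_funpow[OF assms(1,2) \<open>1 \<le> m\<close> y \<open>R < r\<close>, of c]
    by (simp add: c_def)
  then have "R * (1 - c) \<le> 0" by (simp add: algebra_simps)
  moreover have "0 \<le> R" using y by (rule limsup_norm_le_nonneg)
  ultimately show "R = 0"
    using \<open>c < 1\<close> by (simp add: mult_le_0_iff)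
qed

lemma orbit_limit_fixed_point:
  assumes "q0 \<in> Q" "y \<in> Q" and lim: "(\<lambda>n. (T ^^ n) q0) \<longlonglongrightarrow> y"
  shows "T y = y"
proof -
  define x where "x n = (T ^^ n) q0" for n
  have "eventually (\<lambda>n. norm (y - x n) < r) sequentially"
    using lim r_pos by (auto simp: x_def dist_norm norm_minus_commute dest: tendstoD)
  then have "eventually (\<lambda>n. norm (T (x n) - T y) \<le> \<bar>\<beta>s 1 y\<bar> * norm (x n - y)) sequentially"
  proof eventually_elim
    case (elim n)
    have "norm (T y - T (x n)) \<le> \<beta>s 1 y * norm (y - x n)"
      using contraction[OF \<open>y \<in> Q\<close> funpow_in[OF \<open>q0 \<in> Q\<close>, of n] order_refl] elim
      by (simp add: x_def)
    also have "\<dots> \<le> \<bar>\<beta>s 1 y\<bar> * norm (y - x n)"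
      by (simp add: mult_right_mono)
    finally show ?case by (simp add: norm_minus_commute)
  qed
  moreover have "(\<lambda>n. \<bar>\<beta>s 1 y\<bar> * norm (x n - y)) \<longlonglongrightarrow> 0"
    using lim by (auto simp: x_def intro!: tendsto_mult_right_zero tendsto_norm_zero LIM_zero)
  ultimately have "(\<lambda>n. T (x n)) \<longlonglongrightarrow> T y"
    by (auto intro: LIM_zero_cancel Lim_null_comparison)
  moreover have "(\<lambda>n. T (x n)) \<longlonglongrightarrow> y"
    using LIMSEQ_Suc[OF lim] by (simp add: x_def)
  ultimately show ?thesis by (rule LIMSEQ_unique)
qed

end

theorem mainTheorem7:
  fixes Q :: "'a::banach set" and T :: "'a \<Rightarrow> 'a"
    and r :: real and \<beta> :: "'a \<Rightarrow> real" and \<beta>s :: "nat \<Rightarrow> 'a \<Rightarrow> real"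
  assumes "weakly_compact Q" and "convex Q"
    and "r > 0"
    and "\<And>p. p \<in> Q \<Longrightarrow> 0 \<le> \<beta> p \<and> \<beta> p < 1"
    and "\<And>p. p \<in> Q \<Longrightarrow> (\<lambda>n. \<beta>s n p) \<longlonglongrightarrow> \<beta> p"
    and "T ` Q \<subseteq> Q"
    and "\<And>p q n. p \<in> Q \<Longrightarrow> q \<in> Q \<Longrightarrow> n \<ge> 1 \<Longrightarrow> norm (p - q) < r \<Longrightarrow>
           norm ((T ^^ n) p - (T ^^ n) q) \<le> \<beta>s n p * norm (p - q)"
    and "\<exists>q0\<in>Q. asym_radius Q (\<lambda>n. (T ^^ n) q0) < ereal r"
  shows "\<exists>!p. p \<in> Q \<and> T p = p"
proof -
  interpret local_asymptotic_pointwise_contraction Q T r \<beta> \<beta>s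
    using assms(3-7) by unfold_locales auto
  obtain q0 where "q0 \<in> Q" and "asym_radius Q (\<lambda>n. (T ^^ n) q0) < ereal r"
    using assms(8) by blast
  from this(2) obtain y0 t0 where "y0 \<in> Q" "t0 < r" "limsup_norm_le (\<lambda>n. (T ^^ n) q0) y0 t0"
    by (rule asym_radius_lessE)
  then obtain y R where "y \<in> Q" "R \<le> t0" and y: "limsup_norm_le (\<lambda>n. (T ^^ n) q0) y R"
    and "\<And>z t. z \<in> Q \<Longrightarrow> limsup_norm_le (\<lambda>n. (T ^^ n) q0) z t \<Longrightarrow> R \<le> t"
    using weakly_compact_asymptotic_center[OF assms(1)] by metis
  then have "R = 0"
    using orbit_asymptotic_center_radius_zero[OF \<open>q0 \<in> Q\<close>] \<open>t0 < r\<close> by force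
  then have "T y = y"
    using orbit_limit_fixed_point[OF \<open>q0 \<in> Q\<close> \<open>y \<in> Q\<close> limsup_norm_le_zero_LIMSEQ] y by simp
  then show ?thesis
    using fixed_point_unique[OF assms(2)] \<open>y \<in> Q\<close> by blast
qed

end
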